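(* Let $\mathcal{T}$ be an increasing tree of depth $D$, i.e. $c(u)\le c(v)$ whenever $u$ is an ancestor of $v$. Then the online algorithm \textsc{Noadd} is $D$-competitive for MLAPD on $\mathcal{T}$: for every request set $\mathcal{R}$, the total cost of the schedule produced by \textsc{Noadd} is at most $D$ times the cost of an optimal (offline) schedule.
   Context: Multi-level aggregation problem with deadlines (MLAPD): an instance is a rooted tree $\mathcal{T}$ with root $r$ and positive node costs $c(v)>0$, together with a set $\mathcal{R}$ of requests $\rho=(v,a,d)$, each issued at a node $v$, with arrival time $a$ and deadline $d\ge a$ (deadlines are assumed distinct). A service is a pair $(S,t)$ where $S$ is a subtree of $\mathcal{T}$ containing $r$ (so if $v\in S$ then all ancestors of $v$ are in $S$) and $t$ is the transmission time; it costs $c(S)=\sum_{u\in S}c(u)$. A request $(v,a,d)$ is satisfied by $(S,t)$ if $v\in S$ and $a\le t\le d$. A schedule is a set of services; it is feasible if every request is satisfied by some service; its cost is the sum of its services' costs. Online: requests are revealed at their arrival times, the tree is known in advance. The depth $D$ is the maximum number of nodes on a root-to-leaf path. For a request $\rho$ issued at $v$, $P_\rho$ denotes the set of nodes on the path from $r$ to $v$. An algorithm is $c$-competitive if its cost is at most $c$ times the optimal cost on every instance. \textsc{Noadd}: whenever a request $\rho$ that has not yet been satisfied by a previous transmission reaches its deadline $d_\rho$, it transmits the service $(P_\rho,d_\rho)$ and nothing else. *)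

theory Defs
  imports Main "HOL.Real"
begin

definition rooted_tree :: "'v set \<Rightarrow> ('v \<Rightarrow> 'v) \<Rightarrow> 'v \<Rightarrow> bool" where
  "rooted_tree V par r \<longleftrightarrow> finite V \<and> r \<in> V \<and> (\<forall>v\<in>V. v \<noteq> r \<longrightarrow> par v \<in> V)
     \<and> (\<forall>v\<in>V. \<exists>k. (par ^^ k) v = r)"

definition root_dist :: "('v \<Rightarrow> 'v) \<Rightarrow> 'v \<Rightarrow> 'v \<Rightarrow> nat" where
  "root_dist par r v = (LEAST k. (par ^^ k) v = r)"

definition path_to :: "('v \<Rightarrow> 'v) \<Rightarrow> 'v \<Rightarrow> 'v \<Rightarrow> 'v set" where
  "path_to par r v = {(par ^^ k) v | k. k \<le> root_dist par r v}"

definition depth :: "'v set \<Rightarrow> ('v \<Rightarrow> 'v) \<Rightarrow> 'v \<Rightarrow> nat" where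
  "depth V par r = Max ((\<lambda>v. card (path_to par r v)) ` V)"

definition increasing_tree :: "'v set \<Rightarrow> ('v \<Rightarrow> 'v) \<Rightarrow> 'v \<Rightarrow> ('v \<Rightarrow> real) \<Rightarrow> bool" where
  "increasing_tree V par r c \<longleftrightarrow> (\<forall>v\<in>V. \<forall>u\<in>path_to par r v. c u \<le> c v)"

type_synonym 'v request = "'v \<times> real \<times> real"

definition req_node :: "'v request \<Rightarrow> 'v" where "req_node \<rho> = fst \<rho>"
definition req_arr :: "'v request \<Rightarrow> real" where "req_arr \<rho> = fst (snd \<rho>)"
definition req_dl :: "'v request \<Rightarrow> real" where "req_dl \<rho> = snd (snd \<rho>)"

definition valid_requests :: "'v set \<Rightarrow> 'v request set \<Rightarrow> bool" where
  "valid_requests V R \<longleftrightarrow> finite R \<and> (\<forall>\<rho>\<in>R. req_node \<rho> \<in> V \<and> req_arr \<rho> \<le> req_dl \<rho>)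
     \<and> inj_on req_dl R"

text \<open>Services (S, t): S a subtree containing the root, t the transmission time.\<close>
type_synonym 'v service = "'v set \<times> real"

definition valid_service :: "'v set \<Rightarrow> ('v \<Rightarrow> 'v) \<Rightarrow> 'v \<Rightarrow> 'v service \<Rightarrow> bool" where
  "valid_service V par r s \<longleftrightarrow> fst s \<subseteq> V \<and> r \<in> fst s \<and> (\<forall>v\<in>fst s. path_to par r v \<subseteq> fst s)"

definition service_cost :: "('v \<Rightarrow> real) \<Rightarrow> 'v service \<Rightarrow> real" where
  "service_cost c s = (\<Sum>u\<in>fst s. c u)"

definition satisfies :: "'v service \<Rightarrow> 'v request \<Rightarrow> bool" where
  "satisfies s \<rho> \<longleftrightarrow> req_node \<rho> \<in> fst s \<and> req_arr \<rho> \<le> snd s \<and> snd s \<le> req_dl \<rho>"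

definition schedule_cost :: "('v \<Rightarrow> real) \<Rightarrow> 'v service set \<Rightarrow> real" where
  "schedule_cost c sch = (\<Sum>s\<in>sch. service_cost c s)"

text \<open>A feasible schedule: a finite set of (valid) services satisfying every request.
  (Infinite schedules have infinite cost and are irrelevant for the bound.)\<close>
definition feasible_schedule :: "'v set \<Rightarrow> ('v \<Rightarrow> 'v) \<Rightarrow> 'v \<Rightarrow> 'v request set \<Rightarrow> 'v service set \<Rightarrow> bool" where
  "feasible_schedule V par r R sch \<longleftrightarrow> finite sch \<and> (\<forall>s\<in>sch. valid_service V par r s)
     \<and> (\<forall>\<rho>\<in>R. \<exists>s\<in>sch. satisfies s \<rho>)"

text \<open>Noadd: process requests in increasing deadline order; the list T holds the requests
  whose deadline triggered a transmission (P_rho, d_rho) so far.\<close>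
fun noadd_aux :: "('v \<Rightarrow> 'v) \<Rightarrow> 'v \<Rightarrow> 'v request list \<Rightarrow> 'v request list \<Rightarrow> 'v request list" where
  "noadd_aux par r T [] = T"
| "noadd_aux par r T (\<rho> # rs) =
     (if (\<exists>\<rho>'\<in>set T. satisfies (path_to par r (req_node \<rho>'), req_dl \<rho>') \<rho>)
      then noadd_aux par r T rs
      else noadd_aux par r (T @ [\<rho>]) rs)"

definition noadd_schedule :: "('v \<Rightarrow> 'v) \<Rightarrow> 'v \<Rightarrow> 'v request set \<Rightarrow> 'v service set" where
  "noadd_schedule par r R =
     (\<lambda>\<rho>. (path_to par r (req_node \<rho>), req_dl \<rho>)) `
       set (noadd_aux par r [] (sorted_key_list_of_set req_dl R))"

end

theory Submission imports Defs begin

text \<open>The requests whose deadlines trigger a transmission of Noadd are pairwise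
  independent: the transmission triggered by the earlier of two of them does not satisfy
  the later one.  Hence two of them issued at the same node can never be satisfied by the
  same service, so charging each such request to the pair (service, node) of a satisfying
  service of an arbitrary feasible schedule is injective, and the node costs charged sum to at
  most the cost of that schedule.  On an increasing tree the transmission triggered by a
  request issued at \<open>v\<close> costs at most \<open>D \<cdot> c(v)\<close>, which gives the factor \<open>D\<close>.\<close>

definition deadline_independent :: "('v \<Rightarrow> 'v) \<Rightarrow> 'v \<Rightarrow> 'v request set \<Rightarrow> bool" where
  "deadline_independent par r A \<longleftrightarrow> (\<forall>x\<in>A. \<forall>y\<in>A. req_dl x < req_dl y \<longrightarrow>
      \<not> satisfies (path_to par r (req_node x), req_dl x) y)"

definition noadd_requests :: "('v \<Rightarrow> 'v) \<Rightarrow> 'v \<Rightarrow> 'v request set \<Rightarrow> 'v request set" where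
  "noadd_requests par r R = set (noadd_aux par r [] (sorted_key_list_of_set req_dl R))"

lemma self_in_path_to: "v \<in> path_to par r v"
  unfolding path_to_def by (auto intro: exI[where x=0])

lemma path_cost_le_depth:
  assumes "finite V" and "increasing_tree V par r c" and "v \<in> V" and "c v \<ge> 0"
  shows "(\<Sum>u\<in>path_to par r v. c u) \<le> real (depth V par r) * c v"
proof -
  have "(\<Sum>u\<in>path_to par r v. c u) \<le> (\<Sum>u\<in>path_to par r v. c v)"
    using assms(2,3) unfolding increasing_tree_def by (intro sum_mono) auto
  also have "\<dots> = real (card (path_to par r v)) * c v" by simp
  also have "\<dots> \<le> real (depth V par r) * c v"
    using assms(1,3,4) unfolding depth_def by (intro mult_right_mono) (auto intro!: Max_ge)
  finally show ?thesis .
qed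

lemma set_noadd_aux_subset: "set (noadd_aux par r T L) \<subseteq> set T \<union> set L"
proof (induction L arbitrary: T)
  case (Cons \<rho> L)
  then show ?case using Cons.IH[of T] Cons.IH[of "T @ [\<rho>]"] by auto
qed simp

lemma noadd_aux_independent:
  assumes "sorted_wrt (\<lambda>x y. req_dl x < req_dl y) L"
    and "\<forall>x\<in>set T. \<forall>y\<in>set L. req_dl x < req_dl y"
    and "deadline_independent par r (set T)"
  shows "deadline_independent par r (set (noadd_aux par r T L))"
  using assms
proof (induction L arbitrary: T)
  case (Cons \<rho> L)
  show ?case
  proof (cases "\<exists>\<rho>'\<in>set T. satisfies (path_to par r (req_node \<rho>'), req_dl \<rho>') \<rho>")
    case True
    then show ?thesis using Cons by simp
  next
    case False
    have "deadline_independent par r (set (T @ [\<rho>]))"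
      using Cons.prems(2,3) False unfolding deadline_independent_def by fastforce
    then show ?thesis using Cons False by simp
  qed
qed simp

text \<open>Instantiating the locale \<open>folding_insort_key\<close> yields the locale constants
  \<open>linorder.insort_key (\<le>)\<close> etc., which are not syntactically the class constants used in
  the definition of Noadd.\<close>

lemma linorder_insort_key_eq: "linorder.insort_key ((\<le>) :: real \<Rightarrow> real \<Rightarrow> bool) = insort_key"
proof (intro ext)
  fix f :: "'b \<Rightarrow> real" and x xs
  show "linorder.insort_key (\<le>) f x xs = insort_key f x xs"
    by (induction xs) (simp_all add: linorder.insort_key.simps[OF linorder_class.linorder_axioms])
qed

lemma linorder_sorted_key_list_of_set_eq:
  "linorder.sorted_key_list_of_set ((\<le>) :: real \<Rightarrow> real \<Rightarrow> bool) = sorted_key_list_of_set"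
  by (intro ext) (simp add: linorder_insort_key_eq sorted_key_list_of_set_def
      linorder.sorted_key_list_of_set_def[OF linorder_class.linorder_axioms])

lemma sorted_key_list_of_set_by_deadline:
  assumes "finite R" and "inj_on req_dl R"
  shows "set (sorted_key_list_of_set req_dl R) = R"
    and "sorted_wrt (\<lambda>x y. req_dl x < req_dl y) (sorted_key_list_of_set req_dl R)"
proof -
  interpret folding_insort_key "(\<le>) :: real \<Rightarrow> real \<Rightarrow> bool" "(<)" R req_dl
    rewrites "linorder.sorted_key_list_of_set (\<le>) = sorted_key_list_of_set"
    by unfold_locales (fact assms(2) linorder_sorted_key_list_of_set_eq)+
  show "set (sorted_key_list_of_set req_dl R) = R"
    using assms(1) by simp
  show "sorted_wrt (\<lambda>x y. req_dl x < req_dl y) (sorted_key_list_of_set req_dl R)"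
    using strict_sorted_key_list_of_set[of R] by (simp add: sorted_wrt_map)
qed

lemma
  assumes "finite R" and "inj_on req_dl R"
  shows noadd_requests_subset: "noadd_requests par r R \<subseteq> R"
    and noadd_requests_independent: "deadline_independent par r (noadd_requests par r R)"
proof -
  note sorted = sorted_key_list_of_set_by_deadline[OF assms]
  show "noadd_requests par r R \<subseteq> R"
    using set_noadd_aux_subset[of par r "[]"] sorted(1) unfolding noadd_requests_def by auto
  show "deadline_independent par r (noadd_requests par r R)"
    using noadd_aux_independent[OF sorted(2), of "[]"] unfolding noadd_requests_def
    by (simp add: deadline_independent_def)
qed

lemma schedule_cost_noadd_schedule:
  assumes "finite R" and "inj_on req_dl R"
  shows "schedule_cost c (noadd_schedule par r R)
    = (\<Sum>\<rho>\<in>noadd_requests par r R. \<Sum>u\<in>path_to par r (req_node \<rho>). c u)"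
proof -
  have "inj_on (\<lambda>\<rho>. (path_to par r (req_node \<rho>), req_dl \<rho>)) (noadd_requests par r R)"
    by (rule inj_on_imageI2[of snd])
      (simp add: comp_def inj_on_subset[OF assms(2) noadd_requests_subset[OF assms]])
  then show ?thesis
    unfolding schedule_cost_def noadd_schedule_def noadd_requests_def[symmetric]
    by (simp add: sum.reindex service_cost_def)
qed

lemma deadline_independent_eq_if_same_node_and_service:
  assumes "deadline_independent par r A" and "inj_on req_dl A"
    and "x \<in> A" and "y \<in> A" and "req_node x = req_node y"
    and "satisfies s x" and "satisfies s y"
  shows "x = y"
proof (rule ccontr)
  assume "x \<noteq> y"
  with assms(2-4) have "req_dl x \<noteq> req_dl y" by (auto dest: inj_onD)
  then consider "req_dl x < req_dl y" | "req_dl y < req_dl x" by linarith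
  then show False
  proof cases
    case 1
    \<comment> \<open>the common transmission time \<open>t\<close> of \<open>s\<close> gives \<open>a\<^sub>y \<le> t \<le> d\<^sub>x\<close>\<close>
    then have "satisfies (path_to par r (req_node x), req_dl x) y"
      using assms(5-7) self_in_path_to[of "req_node x"] unfolding satisfies_def by auto
    with 1 assms(1,3,4) show False unfolding deadline_independent_def by blast
  next
    case 2
    then have "satisfies (path_to par r (req_node y), req_dl y) x"
      using assms(5-7) self_in_path_to[of "req_node y"] unfolding satisfies_def by auto
    with 2 assms(1,3,4) show False unfolding deadline_independent_def by blast
  qed
qed

lemma schedule_cost_eq_sum_Sigma:
  assumes "finite sch" and "\<forall>s\<in>sch. finite (fst s)"
  shows "schedule_cost c sch = (\<Sum>p\<in>Sigma sch fst. c (snd p))"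
  unfolding schedule_cost_def service_cost_def
  using sum.Sigma[OF assms, of "\<lambda>s u. c u"] by (simp add: split_def)

lemma deadline_independent_cost_le_schedule_cost:
  assumes "finite V" and "\<forall>v\<in>V. c v \<ge> 0" and "feasible_schedule V par r A sch"
    and "deadline_independent par r A" and "inj_on req_dl A"
  shows "(\<Sum>\<rho>\<in>A. c (req_node \<rho>)) \<le> schedule_cost c sch"
proof -
  have sch: "finite sch" "\<forall>s\<in>sch. fst s \<subseteq> V" "\<forall>\<rho>\<in>A. \<exists>s\<in>sch. satisfies s \<rho>"
    using assms(3) unfolding feasible_schedule_def valid_service_def by auto
  then have fin_services: "\<forall>s\<in>sch. finite (fst s)"
    using assms(1) finite_subset by blast
  define serv where "serv \<rho> = (SOME s. s \<in> sch \<and> satisfies s \<rho>)" for \<rho>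
  have serv: "serv \<rho> \<in> sch" "satisfies (serv \<rho>) \<rho>" if "\<rho> \<in> A" for \<rho>
    using someI_ex[OF sch(3)[rule_format, OF that, unfolded Bex_def]] unfolding serv_def by auto
  define charge where "charge \<rho> = (serv \<rho>, req_node \<rho>)" for \<rho>
  have charge_in: "charge ` A \<subseteq> Sigma sch fst"
    using serv unfolding charge_def satisfies_def by auto
  have "inj_on charge A"
    using deadline_independent_eq_if_same_node_and_service[OF assms(4,5)] serv(2)
    unfolding charge_def by (intro inj_onI) (metis prod.inject)
  then have "(\<Sum>\<rho>\<in>A. c (req_node \<rho>)) = (\<Sum>p\<in>charge ` A. c (snd p))"
    by (simp add: sum.reindex) (simp add: charge_def)
  also have "\<dots> \<le> (\<Sum>p\<in>Sigma sch fst. c (snd p))"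
    using charge_in sch(1,2) fin_services assms(2)
    by (intro sum_mono2) (fastforce intro!: finite_SigmaI)+
  also have "\<dots> = schedule_cost c sch"
    using schedule_cost_eq_sum_Sigma[OF sch(1) fin_services] by simp
  finally show ?thesis .
qed

theorem mainTheorem1:
  fixes V :: "'v set" and par :: "'v \<Rightarrow> 'v" and r :: 'v and c :: "'v \<Rightarrow> real"
    and R :: "'v request set" and sch :: "'v service set"
  assumes "rooted_tree V par r"
    and "\<forall>v\<in>V. c v > 0"
    and "increasing_tree V par r c"
    and "valid_requests V R"
    and "feasible_schedule V par r R sch"
  shows "schedule_cost c (noadd_schedule par r R) \<le> real (depth V par r) * schedule_cost c sch"
proof -
  let ?A = "noadd_requests par r R" and ?D = "real (depth V par r)"
  have V: "finite V" "\<forall>v\<in>V. c v \<ge> 0"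
    using assms(1,2) unfolding rooted_tree_def by (auto intro: less_imp_le)
  have R: "finite R" "inj_on req_dl R" "\<forall>\<rho>\<in>R. req_node \<rho> \<in> V"
    using assms(4) unfolding valid_requests_def by auto
  have A: "?A \<subseteq> R" "deadline_independent par r ?A"
    using noadd_requests_subset[OF R(1,2)] noadd_requests_independent[OF R(1,2)] .
  have "schedule_cost c (noadd_schedule par r R) \<le> (\<Sum>\<rho>\<in>?A. ?D * c (req_node \<rho>))"
    unfolding schedule_cost_noadd_schedule[OF R(1,2)]
    using A(1) R(3) V assms(3) by (intro sum_mono path_cost_le_depth) auto
  also have "\<dots> = ?D * (\<Sum>\<rho>\<in>?A. c (req_node \<rho>))"
    by (simp add: sum_distrib_left)
  also have "\<dots> \<le> ?D * schedule_cost c sch"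
    using assms(5) A V inj_on_subset[OF R(2) A(1)]
    by (intro mult_left_mono deadline_independent_cost_le_schedule_cost)
      (auto simp: feasible_schedule_def)
  finally show ?thesis .
qed

end
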